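(* Consider the SAMBA process with a constant learning rate $\alpha\in(0,1)$ satisfying $\alpha<\frac{\Delta}{r^\star-\Delta}$. Let $$\tau(2):=\min\Big\{t\ge1:p_{a^\star}(t)>\tfrac12\Big\},\qquad E(2):=\Big\{\mathbf p\in\mathcal P:\ \tfrac{1-\alpha}{2}\le p_{a^\star}<\tfrac12\Big\}.$$ Then $$\sup_{\mathbf p\in E(2)}\mathbb E\big[\tau(2)\,\big|\,\mathbf p(0)=\mathbf p\big]<\infty.$$
   Context: $\mathcal P$ is the set of probability vectors on $\mathcal A$. Bandit model: $\mathcal A$ finite set of arms, $N=|\mathcal A|$; $R_a(t)\in\{0,1\}$ independent Bernoulli with mean $r_a$ for $a\in\mathcal A$, $t\in\mathbb Z_+$; unique optimal arm $a^\star$ with $r^\star:=r_{a^\star}>r_a$ for $a\ne a^\star$; $\Delta:=r^\star-\max_{a\ne a^\star}r_a>0$. SAMBA process with constant learning rate $\alpha$, started from $\mathbf p(0)$: at time $t$, $a_\star(t)$ is an arm maximizing $p_a(t)$ (ties broken uniformly at random), $p_\star(t)=p_{a_\star(t)}(t)$; one arm is played, arm $a$ with conditional probability $p_a(t)$ given the past; $I_a(t)$ indicates that $a$ is played, $I_\star(t)=I_{a_\star(t)}(t)$, $R_\star(t)=R_{a_\star(t)}(t)$. For $a\ne a_\star(t)$: $p_a(t+1)=p_a(t)+\alpha p_a(t)^2\big[\frac{I_a(t)R_a(t)}{p_a(t)}-\frac{I_\star(t)R_\star(t)}{p_\star(t)}\big]$, and $p_{a_\star(t)}(t+1)=1-\sum_{a\ne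 a_\star(t)}p_a(t+1)$. *)

theory Defs
  imports "HOL-Probability.Probability"
begin

definition prob_vectors :: "('a::finite \<Rightarrow> real) set" where
  "prob_vectors = {p. (\<forall>a. 0 \<le> p a) \<and> (\<Sum>a\<in>UNIV. p a) = 1}"

definition gap :: "('a::finite \<Rightarrow> real) \<Rightarrow> 'a \<Rightarrow> real" where
  "gap r astar = r astar - Max (r ` (UNIV - {astar}))"

text \<open>Set of arms maximizing p (candidates for a_star(t)).\<close>
definition argmax_arms :: "('a::finite \<Rightarrow> real) \<Rightarrow> 'a set" where
  "argmax_arms p = {a. \<forall>b. p b \<le> p a}"

definition arm_pmf :: "('a::finite \<Rightarrow> real) \<Rightarrow> 'a pmf" where
  "arm_pmf p = embed_pmf p"

text \<open>Deterministic SAMBA update, given the leader s = a_star(t), the played arm a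
  and the reward R = R_a(t) of the played arm (the rewards of unplayed arms do not
  enter the update, since they are multiplied by I_a(t) = 0).\<close>
definition samba_update ::
  "real \<Rightarrow> ('a::finite \<Rightarrow> real) \<Rightarrow> 'a \<Rightarrow> 'a \<Rightarrow> bool \<Rightarrow> ('a \<Rightarrow> real)" where
  "samba_update \<alpha> p s a R =
     (let upd = (\<lambda>c. p c + \<alpha> * (p c)\<^sup>2 *
                  ((if c = a \<and> R then 1 / p c else 0) - (if s = a \<and> R then 1 / p s else 0)))
      in (\<lambda>b. if b = s then 1 - (\<Sum>c\<in>UNIV - {s}. upd c) else upd b))"

definition samba_step ::
  "real \<Rightarrow> ('a::finite \<Rightarrow> real) \<Rightarrow> ('a \<Rightarrow> real) \<Rightarrow> ('a \<Rightarrow> real) pmf" where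
  "samba_step \<alpha> r p =
     do { s \<leftarrow> pmf_of_set (argmax_arms p);
          a \<leftarrow> arm_pmf p;
          R \<leftarrow> bernoulli_pmf (r a);
          return_pmf (samba_update \<alpha> p s a R) }"

primrec samba_traj ::
  "real \<Rightarrow> ('a::finite \<Rightarrow> real) \<Rightarrow> nat \<Rightarrow> ('a \<Rightarrow> real) \<Rightarrow> ('a \<Rightarrow> real) list pmf" where
  "samba_traj \<alpha> r 0 p = return_pmf [p]"
| "samba_traj \<alpha> r (Suc n) p =
     bind_pmf (samba_step \<alpha> r p) (\<lambda>q. map_pmf (\<lambda>xs. p # xs) (samba_traj \<alpha> r n q))"

definition tau2_eq_prob ::
  "real \<Rightarrow> ('a::finite \<Rightarrow> real) \<Rightarrow> 'a \<Rightarrow> ('a \<Rightarrow> real) \<Rightarrow> nat \<Rightarrow> real" where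
  "tau2_eq_prob \<alpha> r astar p n =
     measure_pmf.prob (samba_traj \<alpha> r n p)
       {xs. 1 \<le> n \<and> (\<forall>t\<in>{1..<n}. (xs ! t) astar \<le> 1/2) \<and> (xs ! n) astar > 1/2}"

definition tau2_gt_prob ::
  "real \<Rightarrow> ('a::finite \<Rightarrow> real) \<Rightarrow> 'a \<Rightarrow> ('a \<Rightarrow> real) \<Rightarrow> nat \<Rightarrow> real" where
  "tau2_gt_prob \<alpha> r astar p n =
     measure_pmf.prob (samba_traj \<alpha> r n p) {xs. \<forall>t\<in>{1..n}. (xs ! t) astar \<le> 1/2}"

text \<open>E[tau(2) | p(0) = p] as an extended nonnegative real:
  sum_n n P(tau = n) + \<infinity> * P(tau = \<infinity>), with P(tau = \<infinity>) = inf_n P(tau > n).\<close>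
definition expected_tau2 ::
  "real \<Rightarrow> ('a::finite \<Rightarrow> real) \<Rightarrow> 'a \<Rightarrow> ('a \<Rightarrow> real) \<Rightarrow> ennreal" where
  "expected_tau2 \<alpha> r astar p =
     (\<Sum>n. ennreal (real n) * ennreal (tau2_eq_prob \<alpha> r astar p n))
     + \<top> * (INF n. ennreal (tau2_gt_prob \<alpha> r astar p n))"

end

theory Submission
  imports Defs
begin

(*
  Write x for the weight of the optimal arm. We use the Foster-Lyapunov function
  V = K / x + L (1 - x): it suffices that E[V(p(t+1)) | p(t)] <= V(p(t)) - 1 while x <= 1/2,
  since then E[min(tau(2), n)] <= V(p(0)) for all n, and V is bounded on E(2) because
  x >= (1 - alpha)/2 there. Unrewarded steps leave p unchanged, so only rewarded plays
  contribute to the drift.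

  If a suboptimal arm s leads, x only moves when the optimal arm or s is rewarded, by the
  factors 1 + alpha and 1 - alpha x / p(s). The hypothesis on alpha says exactly that
  r* / (1 + alpha) exceeds every suboptimal mean reward, which makes the K-term decrease
  when x is small compared with p(s); otherwise x is bounded below and the L-term, which
  gains alpha L x^2 (r* - r(s)) >= alpha L x^2 Delta, dominates. If the optimal arm leads,
  a reward for it raises x by alpha Q / x with Q the sum of squares of the other weights,
  and a reward for an arm a lowers x by alpha p(a); the L-term gains at rate r* Q and loses
  at most at rate (r* - Delta) Q, and Q >= 1/(4 N^2) as long as x <= 1/2.
*)

section \<open>One step of the SAMBA chain\<close>

lemma pmf_arm_pmf:
  assumes "p \<in> prob_vectors"
  shows "pmf (arm_pmf p) a = p a"
  unfolding arm_pmf_def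
proof (rule pmf_embed_pmf)
  show "\<And>x. 0 \<le> p x" using assms by (simp add: prob_vectors_def)
  show "(\<integral>\<^sup>+ x. ennreal (p x) \<partial>count_space UNIV) = 1"
    using assms by (simp add: nn_integral_count_space_finite prob_vectors_def)
qed

lemma argmax_arms_nonempty: "argmax_arms (p :: 'a::finite \<Rightarrow> real) \<noteq> {}"
proof -
  have "Max (range p) \<in> range p" by (rule Max_in) auto
  then obtain a where "p a = Max (range p)" by (metis imageE)
  then have "a \<in> argmax_arms p" by (auto simp: argmax_arms_def)
  then show ?thesis by auto
qed

lemma argmax_arms_ge_inverse_card:
  fixes p :: "'a::finite \<Rightarrow> real"
  assumes "p \<in> prob_vectors" and "s \<in> argmax_arms p"
  shows "1 / real CARD('a) \<le> p s"
proof -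
  have "1 = sum p (UNIV :: 'a set)" using assms(1) by (simp add: prob_vectors_def)
  also have "\<dots> \<le> (\<Sum>_\<in>(UNIV :: 'a set). p s)"
    using assms(2) by (intro sum_mono) (simp add: argmax_arms_def)
  finally show ?thesis by (simp add: field_simps)
qed

lemma sum_squares_compl_ge:
  fixes p :: "'a::finite \<Rightarrow> real"
  assumes pv: "p \<in> prob_vectors" and ps: "p s \<le> 1/2" and card: "2 \<le> CARD('a)"
  shows "1 / (4 * (real CARD('a))\<^sup>2) \<le> (\<Sum>c\<in>-{s}. (p c)\<^sup>2)"
proof -
  let ?N = "real CARD('a)"
  have rest: "(\<Sum>c\<in>-{s}. p c) = 1 - p s"
    using pv sum.remove[of UNIV s p] by (simp add: prob_vectors_def Compl_eq_Diff_UNIV)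
  have "card (-{s}) = CARD('a) - 1" by (simp add: Compl_eq_Diff_UNIV card_Diff_subset)
  then have ne: "-{s} \<noteq> {}" using card by auto
  have "\<exists>c\<in>-{s}. 1 / (2 * ?N) \<le> p c"
  proof (rule ccontr)
    assume "\<not> ?thesis"
    then have "p c < 1 / (2 * ?N)" if "c \<in> -{s}" for c using that by (meson not_le)
    then have "(\<Sum>c\<in>-{s}. p c) < (\<Sum>c\<in>-{s}. 1 / (2 * ?N))"
      by (intro sum_strict_mono ne) auto
    also have "\<dots> = real (CARD('a) - 1) / (2 * ?N)" by (simp add: \<open>card (-{s}) = CARD('a) - 1\<close>)
    also have "\<dots> \<le> 1 / 2" by (simp add: field_simps)
    finally show False using rest ps by linarith
  qed
  then obtain c where c: "c \<in> -{s}" "1 / (2 * ?N) \<le> p c" by blast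
  have "1 / (4 * ?N\<^sup>2) = (1 / (2 * ?N))\<^sup>2" by (simp add: power2_eq_square)
  also have "\<dots> \<le> (p c)\<^sup>2" using c by (intro power_mono) auto
  also have "\<dots> \<le> (\<Sum>c\<in>-{s}. (p c)\<^sup>2)" by (rule member_le_sum[OF c(1)]) auto
  finally show ?thesis .
qed

lemma sum_samba_update: "sum (samba_update \<alpha> p s a R) UNIV = 1"
proof -
  have "sum (samba_update \<alpha> p s a R) UNIV =
      samba_update \<alpha> p s a R s + sum (samba_update \<alpha> p s a R) (UNIV - {s})"
    by (rule sum.remove) auto
  also have "sum (samba_update \<alpha> p s a R) (UNIV - {s}) =
      1 - samba_update \<alpha> p s a R s"
    by (simp add: samba_update_def Let_def)
  finally show ?thesis by simp
qed

lemma samba_update_no_reward: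
  assumes "p \<in> prob_vectors"
  shows "samba_update \<alpha> p s a False = p"
proof
  fix b
  show "samba_update \<alpha> p s a False b = p b"
    using assms sum.remove[of UNIV s p] by (simp add: samba_update_def prob_vectors_def)
qed

lemma samba_update_reward_other:
  assumes "b \<noteq> s"
  shows "samba_update \<alpha> p s a True b =
    (if b = a then (1 + \<alpha>) * p b else if a = s then p b - \<alpha> * (p b)\<^sup>2 / p s else p b)"
  using assms by (auto simp: samba_update_def power2_eq_square field_simps)

lemma samba_update_reward_leader:
  assumes "p \<in> prob_vectors"
  shows "samba_update \<alpha> p s a True s =
    (if a = s then p s + \<alpha> * (\<Sum>c\<in>-{s}. (p c)\<^sup>2) / p s else p s - \<alpha> * p a)"
proof -
  have rest: "(\<Sum>c\<in>-{s}. p c) = 1 - p s"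
    using assms sum.remove[of UNIV s p] by (simp add: prob_vectors_def Compl_eq_Diff_UNIV)
  have "samba_update \<alpha> p s a True s = 1 - (\<Sum>c\<in>-{s}. samba_update \<alpha> p s a True c)"
    using sum_samba_update[of \<alpha> p s a True] sum.remove[of UNIV s "samba_update \<alpha> p s a True"]
    by (simp add: Compl_eq_Diff_UNIV)
  also have "(\<Sum>c\<in>-{s}. samba_update \<alpha> p s a True c) =
      (\<Sum>c\<in>-{s}. p c + (if a = s then - \<alpha> * (p c)\<^sup>2 / p s else if c = a then \<alpha> * p c else 0))"
    by (intro sum.cong refl) (auto simp: samba_update_reward_other algebra_simps)
  also have "\<dots> = 1 - p s + (if a = s then - \<alpha> * (\<Sum>c\<in>-{s}. (p c)\<^sup>2) / p s else \<alpha> * p a)"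
    by (auto simp: sum.distrib rest sum_distrib_left sum_divide_distrib)
  finally show ?thesis by auto
qed

lemma samba_update_nonneg_and_pos:
  fixes p :: "'a::finite \<Rightarrow> real"
  assumes pv: "p \<in> prob_vectors" and \<alpha>: "0 < \<alpha>" "\<alpha> < 1" and s: "s \<in> argmax_arms p"
  shows "0 \<le> samba_update \<alpha> p s a R c \<and> (0 < p c \<longrightarrow> 0 < samba_update \<alpha> p s a R c)"
proof (cases R)
  case False
  then show ?thesis using pv by (simp add: samba_update_no_reward prob_vectors_def)
next
  case True
  have ps: "0 < p s"
    by (rule less_le_trans[OF _ argmax_arms_ge_inverse_card[OF pv s]]) simp
  have le_ps: "p b \<le> p s" for b using s by (simp add: argmax_arms_def)
  have pc: "0 \<le> p c" using pv by (simp add: prob_vectors_def)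
  show ?thesis
  proof (cases "c = s")
    case True
    have "\<alpha> * p a \<le> \<alpha> * p s" using \<alpha> le_ps[of a] by simp
    also have "\<dots> < p s" using \<alpha> ps by simp
    finally have "\<alpha> * p a < p s" .
    moreover have "0 \<le> \<alpha> * (\<Sum>c\<in>-{s}. (p c)\<^sup>2) / p s" using \<alpha> ps by (simp add: sum_nonneg)
    ultimately show ?thesis using \<open>R\<close> \<open>c = s\<close> ps by (simp add: samba_update_reward_leader[OF pv])
  next
    case False
    have "p c / p s \<le> 1" using ps le_ps[of c] by simp
    then have "\<alpha> * (p c / p s) \<le> \<alpha>" using \<alpha> mult_left_le[of "p c / p s" \<alpha>] by simp
    then have "0 < 1 - \<alpha> * (p c / p s)" using \<alpha> by simp
    moreover have "p c - \<alpha> * (p c)\<^sup>2 / p s = p c * (1 - \<alpha> * (p c / p s))"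
      by (simp add: power2_eq_square field_simps)
    ultimately show ?thesis using \<open>R\<close> False pc \<alpha>
      by (auto simp: samba_update_reward_other)
  qed
qed

lemma samba_update_in_prob_vectors:
  fixes p :: "'a::finite \<Rightarrow> real"
  assumes "p \<in> prob_vectors" "0 < \<alpha>" "\<alpha> < 1" "s \<in> argmax_arms p"
  shows "samba_update \<alpha> p s a R \<in> prob_vectors"
  using samba_update_nonneg_and_pos[OF assms] sum_samba_update by (simp add: prob_vectors_def)

lemma set_pmf_samba_step:
  assumes "q \<in> set_pmf (samba_step \<alpha> r p)"
  obtains s a R where "s \<in> argmax_arms p" "q = samba_update \<alpha> p s a R"
  using assms argmax_arms_nonempty[of p] by (auto simp: samba_step_def)

lemma finite_set_pmf_samba_step: "finite (set_pmf (samba_step \<alpha> r (p :: 'a::finite \<Rightarrow> real)))"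
proof (rule finite_subset)
  show "set_pmf (samba_step \<alpha> r p) \<subseteq> (\<lambda>(s, a, R). samba_update \<alpha> p s a R) ` UNIV"
  proof
    fix q assume "q \<in> set_pmf (samba_step \<alpha> r p)"
    then obtain s a R where "q = samba_update \<alpha> p s a R" by (rule set_pmf_samba_step)
    then show "q \<in> (\<lambda>(s, a, R). samba_update \<alpha> p s a R) ` UNIV"
      by (intro rev_image_eqI[of "(s, a, R)"]) auto
  qed
qed simp

lemma integrable_samba_step [simp]:
  "integrable (measure_pmf (samba_step \<alpha> r (p :: 'a::finite \<Rightarrow> real))) (f :: _ \<Rightarrow> real)"
  by (rule integrable_measure_pmf_finite[OF finite_set_pmf_samba_step])

lemma expectation_samba_step:
  fixes p :: "'a::finite \<Rightarrow> real" and f :: "('a \<Rightarrow> real) \<Rightarrow> real"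
  assumes pv: "p \<in> prob_vectors" and r: "\<And>a. 0 \<le> r a \<and> r a \<le> 1"
  shows "measure_pmf.expectation (samba_step \<alpha> r p) f =
    f p + (\<Sum>s\<in>argmax_arms p. \<Sum>a\<in>UNIV. p a * r a * (f (samba_update \<alpha> p s a True) - f p))
            / card (argmax_arms p)"
proof -
  let ?S = "argmax_arms p"
  have S: "?S \<noteq> {}" "finite ?S" "card ?S > 0"
    using argmax_arms_nonempty[of p] by (auto simp: card_gt_0_iff)
  have leader: "measure_pmf.expectation
      (arm_pmf p \<bind> (\<lambda>a. bernoulli_pmf (r a) \<bind> (\<lambda>R. return_pmf (samba_update \<alpha> p s a R)))) f =
      f p + (\<Sum>a\<in>UNIV. p a * r a * (f (samba_update \<alpha> p s a True) - f p))" for s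
  proof -
    have "measure_pmf.expectation
        (arm_pmf p \<bind> (\<lambda>a. bernoulli_pmf (r a) \<bind> (\<lambda>R. return_pmf (samba_update \<alpha> p s a R)))) f =
        (\<Sum>a\<in>UNIV. p a * (f (samba_update \<alpha> p s a True) * r a + f p * (1 - r a)))"
      using r by (subst pmf_expectation_bind[of UNIV])
        (auto simp: pmf_arm_pmf[OF pv] samba_update_no_reward[OF pv] map_pmf_def[symmetric])
    also have "\<dots> = (\<Sum>a\<in>UNIV. f p * p a + p a * r a * (f (samba_update \<alpha> p s a True) - f p))"
      by (simp add: algebra_simps)
    also have "\<dots> = f p + (\<Sum>a\<in>UNIV. p a * r a * (f (samba_update \<alpha> p s a True) - f p))"
      using pv by (simp add: prob_vectors_def sum.distrib flip: sum_distrib_left)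
    finally show ?thesis .
  qed
  have "measure_pmf.expectation (samba_step \<alpha> r p) f =
      (\<Sum>s\<in>?S. (f p + (\<Sum>a\<in>UNIV. p a * r a * (f (samba_update \<alpha> p s a True) - f p))) / card ?S)"
    unfolding samba_step_def
    by (subst pmf_expectation_bind_pmf_of_set[OF S(1,2)]) (auto simp: leader divide_inverse_commute)
  also have "\<dots> = f p + (\<Sum>s\<in>?S. \<Sum>a\<in>UNIV. p a * r a * (f (samba_update \<alpha> p s a True) - f p))
                    / card ?S"
    using S by (simp add: sum.distrib add_divide_distrib sum_divide_distrib)
  finally show ?thesis .
qed

lemma expectation_samba_step_le:
  fixes p :: "'a::finite \<Rightarrow> real" and f :: "('a \<Rightarrow> real) \<Rightarrow> real"
  assumes "p \<in> prob_vectors" "\<And>a. 0 \<le> r a \<and> r a \<le> 1"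
    and drift: "\<And>s. s \<in> argmax_arms p \<Longrightarrow>
                  (\<Sum>a\<in>UNIV. p a * r a * (f (samba_update \<alpha> p s a True) - f p)) \<le> c"
  shows "measure_pmf.expectation (samba_step \<alpha> r p) f \<le> f p + c"
proof -
  let ?S = "argmax_arms p"
  have "card ?S > 0" using argmax_arms_nonempty[of p] by (auto simp: card_gt_0_iff)
  moreover have "(\<Sum>s\<in>?S. \<Sum>a\<in>UNIV. p a * r a * (f (samba_update \<alpha> p s a True) - f p)) \<le> card ?S * c"
    using sum_mono[of ?S _ "\<lambda>_. c", OF drift] by simp
  ultimately show ?thesis
    by (simp add: expectation_samba_step[OF assms(1,2)] pos_divide_le_eq mult.commute)
qed

section \<open>The hitting time of the region p(a*) > 1/2\<close>

lemma prob_eq_on_set_pmf: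
  assumes "\<And>x. x \<in> set_pmf M \<Longrightarrow> x \<in> A \<longleftrightarrow> x \<in> B"
  shows "measure_pmf.prob M A = measure_pmf.prob M B"
proof -
  have "A \<inter> set_pmf M = B \<inter> set_pmf M" using assms by auto
  then show ?thesis by (metis measure_Int_set_pmf)
qed

lemma ball_atLeastAtMost_Suc_shift:
  "(\<forall>t\<in>{Suc m..Suc n}. P t) \<longleftrightarrow> (\<forall>t\<in>{m..n}. P (Suc t))"
  unfolding image_Suc_atLeastAtMost[symmetric] by blast

lemma ball_atLeastLessThan_Suc_shift:
  "(\<forall>t\<in>{Suc m..<Suc n}. P t) \<longleftrightarrow> (\<forall>t\<in>{m..<n}. P (Suc t))"
  unfolding image_Suc_atLeastLessThan[symmetric] by blast

lemma samba_traj_nth_0: "ys \<in> set_pmf (samba_traj \<alpha> r n q) \<Longrightarrow> ys ! 0 = q"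
  by (induction n arbitrary: q ys) (auto simp: set_bind_pmf)

lemma finite_set_pmf_samba_traj: "finite (set_pmf (samba_traj \<alpha> r n (q :: 'a::finite \<Rightarrow> real)))"
  by (induction n arbitrary: q) (auto simp: set_bind_pmf finite_set_pmf_samba_step)

lemma prob_samba_traj_Suc:
  fixes p :: "'a::finite \<Rightarrow> real"
  shows "measure_pmf.prob (samba_traj \<alpha> r (Suc n) p) A =
    measure_pmf.expectation (samba_step \<alpha> r p)
      (\<lambda>q. measure_pmf.prob (samba_traj \<alpha> r n q) ((#) p -` A))"
proof -
  have "measure_pmf.prob (samba_traj \<alpha> r (Suc n) p) A =
      measure_pmf.expectation (samba_traj \<alpha> r (Suc n) p) (indicator A)"
    by simp
  also have "\<dots> = (\<Sum>q\<in>set_pmf (samba_step \<alpha> r p). pmf (samba_step \<alpha> r p) q *\<^sub>R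
      measure_pmf.expectation (map_pmf ((#) p) (samba_traj \<alpha> r n q)) (indicator A))"
    by (simp only: samba_traj.simps, rule pmf_expectation_bind)
      (auto simp: finite_set_pmf_samba_step finite_set_pmf_samba_traj)
  also have "\<dots> = measure_pmf.expectation (samba_step \<alpha> r p)
      (\<lambda>q. measure_pmf.prob (samba_traj \<alpha> r n q) ((#) p -` A))"
    by (subst integral_measure_pmf_real[OF finite_set_pmf_samba_step])
      (auto simp: mult.commute simp flip: indicator_vimage intro!: sum.cong)
  finally show ?thesis .
qed

lemma tau2_gt_prob_0 [simp]: "tau2_gt_prob \<alpha> r astar p 0 = 1"
  by (simp add: tau2_gt_prob_def)

lemma tau2_eq_prob_0 [simp]: "tau2_eq_prob \<alpha> r astar p 0 = 0"
  by (simp add: tau2_eq_prob_def)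

lemma tau2_gt_prob_nonneg: "0 \<le> tau2_gt_prob \<alpha> r astar p k"
  by (simp add: tau2_gt_prob_def)

lemma tau2_eq_prob_nonneg: "0 \<le> tau2_eq_prob \<alpha> r astar p k"
  by (simp add: tau2_eq_prob_def)

lemma tau2_gt_prob_Suc:
  fixes p :: "'a::finite \<Rightarrow> real"
  shows "tau2_gt_prob \<alpha> r astar p (Suc k) =
    measure_pmf.expectation (samba_step \<alpha> r p)
      (\<lambda>q. if q astar \<le> 1/2 then tau2_gt_prob \<alpha> r astar q k else 0)"
proof -
  let ?P = "\<lambda>n. {xs. \<forall>t\<in>{1..n}. (xs ! t) astar \<le> 1/2}"
  have shift: "measure_pmf.prob (samba_traj \<alpha> r k q) ((#) p -` ?P (Suc k)) =
      measure_pmf.prob (samba_traj \<alpha> r k q) (if q astar \<le> 1/2 then ?P k else {})" for q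
  proof (rule prob_eq_on_set_pmf)
    fix ys assume "ys \<in> set_pmf (samba_traj \<alpha> r k q)"
    then have "ys ! 0 = q" by (rule samba_traj_nth_0)
    have "ys \<in> (#) p -` ?P (Suc k) \<longleftrightarrow> (\<forall>t\<in>{0..k}. (ys ! t) astar \<le> 1/2)"
      using ball_atLeastAtMost_Suc_shift[of 0 k] by simp
    also have "{0..k} = insert 0 {1..k}" by auto
    finally show "ys \<in> (#) p -` ?P (Suc k) \<longleftrightarrow> ys \<in> (if q astar \<le> 1/2 then ?P k else {})"
      using \<open>ys ! 0 = q\<close> by simp
  qed
  show ?thesis
    unfolding tau2_gt_prob_def prob_samba_traj_Suc
    by (rule Bochner_Integration.integral_cong[OF refl], subst shift, simp)
qed

lemma tau2_eq_prob_Suc: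
  fixes p :: "'a::finite \<Rightarrow> real"
  shows "tau2_eq_prob \<alpha> r astar p (Suc k) =
    measure_pmf.expectation (samba_step \<alpha> r p)
      (\<lambda>q. if q astar \<le> 1/2 then tau2_eq_prob \<alpha> r astar q k else if k = 0 then 1 else 0)"
proof -
  let ?E = "\<lambda>n. {xs. 1 \<le> n \<and> (\<forall>t\<in>{1..<n}. (xs ! t) astar \<le> 1/2) \<and> (xs ! n) astar > 1/2}"
  have shift: "measure_pmf.prob (samba_traj \<alpha> r k q) ((#) p -` ?E (Suc k)) =
      measure_pmf.prob (samba_traj \<alpha> r k q)
        (if q astar \<le> 1/2 then ?E k else if k = 0 then UNIV else {})" for q
  proof (rule prob_eq_on_set_pmf)
    fix ys assume "ys \<in> set_pmf (samba_traj \<alpha> r k q)"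
    then have "ys ! 0 = q" by (rule samba_traj_nth_0)
    have shifted: "ys \<in> (#) p -` ?E (Suc k) \<longleftrightarrow>
        (\<forall>t\<in>{0..<k}. (ys ! t) astar \<le> 1/2) \<and> (ys ! k) astar > 1/2"
      using ball_atLeastLessThan_Suc_shift[of 0 k] by simp
    show "ys \<in> (#) p -` ?E (Suc k) \<longleftrightarrow>
        ys \<in> (if q astar \<le> 1/2 then ?E k else if k = 0 then UNIV else {})"
    proof (cases "k = 0")
      case True
      then show ?thesis using shifted \<open>ys ! 0 = q\<close> by simp
    next
      case False
      then have "{0..<k} = insert 0 {1..<k}" by auto
      then show ?thesis using shifted \<open>ys ! 0 = q\<close> False by simp
    qed
  qed
  show ?thesis
    unfolding tau2_eq_prob_def prob_samba_traj_Suc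
    by (rule Bochner_Integration.integral_cong[OF refl], subst shift, simp)
qed

lemma tau2_eq_prob_Suc_eq_diff:
  fixes p :: "'a::finite \<Rightarrow> real"
  shows "tau2_eq_prob \<alpha> r astar p (Suc k) = tau2_gt_prob \<alpha> r astar p k - tau2_gt_prob \<alpha> r astar p (Suc k)"
proof (induction k arbitrary: p)
  case 0
  let ?E = "measure_pmf.expectation (samba_step \<alpha> r p)"
  have "tau2_eq_prob \<alpha> r astar p (Suc 0) =
      ?E (\<lambda>q. 1 - (if q astar \<le> 1/2 then tau2_gt_prob \<alpha> r astar q 0 else 0))"
    unfolding tau2_eq_prob_Suc by (intro Bochner_Integration.integral_cong) auto
  also have "\<dots> = tau2_gt_prob \<alpha> r astar p 0 - tau2_gt_prob \<alpha> r astar p (Suc 0)"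
    unfolding tau2_gt_prob_Suc[of _ _ _ p 0] by simp
  finally show ?case .
next
  case (Suc k)
  let ?E = "measure_pmf.expectation (samba_step \<alpha> r p)"
  have "tau2_eq_prob \<alpha> r astar p (Suc (Suc k)) =
      ?E (\<lambda>q. (if q astar \<le> 1/2 then tau2_gt_prob \<alpha> r astar q k else 0)
              - (if q astar \<le> 1/2 then tau2_gt_prob \<alpha> r astar q (Suc k) else 0))"
    unfolding tau2_eq_prob_Suc[of _ _ _ p "Suc k"] by (intro Bochner_Integration.integral_cong) (auto simp: Suc.IH)
  also have "\<dots> = tau2_gt_prob \<alpha> r astar p (Suc k) - tau2_gt_prob \<alpha> r astar p (Suc (Suc k))"
    unfolding tau2_gt_prob_Suc[of _ _ _ p "Suc k"] tau2_gt_prob_Suc[of _ _ _ p k] by simp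
  finally show ?case .
qed

lemma tau2_tail_sum:
  fixes p :: "'a::finite \<Rightarrow> real"
  shows "(\<Sum>k\<le>n. real k * tau2_eq_prob \<alpha> r astar p k) + real n * tau2_gt_prob \<alpha> r astar p n =
    (\<Sum>k<n. tau2_gt_prob \<alpha> r astar p k)"
  by (induction n) (simp_all add: tau2_eq_prob_Suc_eq_diff algebra_simps)

lemma expected_tau2_le:
  fixes p :: "'a::finite \<Rightarrow> real"
  assumes partial_sums: "\<And>n. (\<Sum>k<n. tau2_gt_prob \<alpha> r astar p k) \<le> B"
  shows "expected_tau2 \<alpha> r astar p \<le> ennreal B"
proof -
  let ?e = "tau2_eq_prob \<alpha> r astar p" and ?g = "tau2_gt_prob \<alpha> r astar p"
  have mean_le: "(\<Sum>k\<le>n. real k * ?e k) \<le> B" and tail_le: "real n * ?g n \<le> B" for n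
  proof -
    have "0 \<le> (\<Sum>k\<le>n. real k * ?e k)" by (simp add: sum_nonneg tau2_eq_prob_nonneg)
    moreover have "0 \<le> real n * ?g n" by (simp add: tau2_gt_prob_nonneg)
    ultimately show "(\<Sum>k\<le>n. real k * ?e k) \<le> B" "real n * ?g n \<le> B"
      using tau2_tail_sum[where n=n and \<alpha>=\<alpha> and r=r and astar=astar and p=p] partial_sums[of n]
      by linarith+
  qed
  have "(\<Sum>n. ennreal (real n) * ennreal (?e n)) \<le> ennreal B"
  proof (rule suminf_le_const)
    fix n
    have "(\<Sum>k<n. ennreal (real k) * ennreal (?e k)) = (\<Sum>k<n. ennreal (real k * ?e k))"
      by (simp add: ennreal_mult')
    also have "\<dots> = ennreal (\<Sum>k<n. real k * ?e k)"
      by (simp add: tau2_eq_prob_nonneg)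
    also have "\<dots> \<le> ennreal B"
    proof (rule ennreal_leI)
      have "(\<Sum>k<n. real k * ?e k) \<le> (\<Sum>k\<le>n. real k * ?e k)"
        by (rule sum_mono2) (auto simp: tau2_eq_prob_nonneg)
      then show "(\<Sum>k<n. real k * ?e k) \<le> B" using mean_le[of n] by linarith
    qed
    finally show "(\<Sum>k<n. ennreal (real k) * ennreal (?e k)) \<le> ennreal B" .
  qed (rule summableI)
  moreover have "(INF n. ennreal (?g n)) \<le> 0"
  proof (rule ennreal_le_epsilon)
    fix \<epsilon> :: real assume "0 < \<epsilon>"
    obtain n :: nat where n: "B / \<epsilon> < real n" "0 < n"
      using reals_Archimedean2[of "max (B / \<epsilon>) 0"] by (auto simp: max_def split: if_splits)
    then have "?g n \<le> B / real n" using tail_le[of n] by (simp add: field_simps)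
    also have "\<dots> \<le> \<epsilon>" using n \<open>0 < \<epsilon>\<close> by (simp add: field_simps)
    finally have "?g n \<le> \<epsilon>" .
    then show "(INF n. ennreal (?g n)) \<le> 0 + ennreal \<epsilon>"
      using INF_lower2[of n UNIV "\<lambda>n. ennreal (?g n)" "ennreal \<epsilon>"] by (simp add: ennreal_leI)
  qed
  ultimately show ?thesis by (simp add: expected_tau2_def)
qed

lemma sum_tau2_gt_prob_le_lyapunov:
  fixes V :: "('a::finite \<Rightarrow> real) \<Rightarrow> real" and S :: "('a \<Rightarrow> real) set"
  assumes invariant: "\<And>p q. p \<in> S \<Longrightarrow> q \<in> set_pmf (samba_step \<alpha> r p) \<Longrightarrow> q \<in> S"
    and nonneg: "\<And>p. p \<in> S \<Longrightarrow> 0 \<le> V p"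
    and drift: "\<And>p. p \<in> S \<Longrightarrow> p astar \<le> 1/2 \<Longrightarrow>
                  measure_pmf.expectation (samba_step \<alpha> r p) V \<le> V p - 1"
  shows "p \<in> S \<Longrightarrow> p astar \<le> 1/2 \<Longrightarrow> (\<Sum>k<n. tau2_gt_prob \<alpha> r astar p k) \<le> V p"
proof (induction n arbitrary: p)
  case 0
  then show ?case using nonneg by simp
next
  case (Suc n)
  let ?E = "measure_pmf.expectation (samba_step \<alpha> r p)"
  have "(\<Sum>k<Suc n. tau2_gt_prob \<alpha> r astar p k) = 1 + (\<Sum>k<n. tau2_gt_prob \<alpha> r astar p (Suc k))"
    by (simp only: sum.lessThan_Suc_shift tau2_gt_prob_0)
  also have "(\<Sum>k<n. tau2_gt_prob \<alpha> r astar p (Suc k)) =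
      (\<Sum>k<n. ?E (\<lambda>q. if q astar \<le> 1/2 then tau2_gt_prob \<alpha> r astar q k else 0))"
    by (simp only: tau2_gt_prob_Suc)
  also have "\<dots> = ?E (\<lambda>q. \<Sum>k<n. if q astar \<le> 1/2 then tau2_gt_prob \<alpha> r astar q k else 0)"
    by (subst Bochner_Integration.integral_sum) simp_all
  also have "\<dots> \<le> ?E V"
  proof (rule integral_mono_AE)
    show "AE q in measure_pmf (samba_step \<alpha> r p).
        (\<Sum>k<n. if q astar \<le> 1/2 then tau2_gt_prob \<alpha> r astar q k else 0) \<le> V q"
    proof (rule AE_pmfI)
      fix q assume "q \<in> set_pmf (samba_step \<alpha> r p)"
      then have "q \<in> S" using invariant Suc.prems(1) by blast
      then show "(\<Sum>k<n. if q astar \<le> 1/2 then tau2_gt_prob \<alpha> r astar q k else 0) \<le> V q"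
        using Suc.IH[OF \<open>q \<in> S\<close>] nonneg[OF \<open>q \<in> S\<close>] by (cases "q astar \<le> 1/2") simp_all
    qed
  qed simp_all
  also have "?E V \<le> V p - 1" using drift Suc.prems by blast
  finally show ?case by simp
qed

section \<open>The Lyapunov function\<close>

definition lyapunov :: "real \<Rightarrow> real \<Rightarrow> real \<Rightarrow> real" where
  "lyapunov K L x = K / x + L * (1 - x)"

lemma lyapunov_diff:
  assumes "x \<noteq> 0" "y \<noteq> 0"
  shows "lyapunov K L y - lyapunov K L x = (x - y) * (K / (x * y) + L)"
  using assms by (simp add: lyapunov_def field_simps)

lemma lyapunov_scaled_diff:
  assumes "x \<noteq> 0" "c \<noteq> 0"
  shows "x * (lyapunov K L (c * x) - lyapunov K L x) = (1 - c) * (K / c + L * x\<^sup>2)"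
  using assms by (simp add: lyapunov_def power2_eq_square field_simps)

lemma suboptimal_leader_drift_bound:
  fixes \<alpha> \<rho> \<eta> \<Delta> rs rst u x N K L :: real
  assumes \<alpha>: "0 < \<alpha>" "\<alpha> < 1" and u: "0 < u" "u \<le> 1" "u \<le> N * x" and N: "0 < N"
    and rs: "0 \<le> rs" "rs \<le> \<rho>" and rst: "rst \<le> 1" and \<Delta>: "0 < \<Delta>" "\<Delta> \<le> rst - rs"
    and \<eta>: "0 < \<eta>" "rst / (1 + \<alpha>) = \<rho> + \<eta>"
    and K: "K = 2 / (\<alpha> * \<eta>)"
    and L: "(K * \<alpha> / (1 - \<alpha>) + 1) / (\<alpha> * \<Delta> * (\<eta> / (4 * N))\<^sup>2) \<le> L"
  shows "\<alpha> * rs * (K / (1 - \<alpha> * u) + L * x\<^sup>2) - \<alpha> * rst * (K / (1 + \<alpha>) + L * x\<^sup>2) \<le> -1"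
proof -
  have K0: "0 < K" using K \<alpha> \<eta> by simp
  have "0 \<le> (K * \<alpha> / (1 - \<alpha>) + 1) / (\<alpha> * \<Delta> * (\<eta> / (4 * N))\<^sup>2)"
    using K0 \<alpha> \<Delta> by simp
  then have L0: "0 \<le> L" using L by linarith
  have au: "\<alpha> * u \<le> u" using \<alpha> u by (simp add: mult_left_le_one_le)
  have reformulated: "?thesis \<longleftrightarrow> \<alpha> * K * (rs / (1 - \<alpha> * u) - rst / (1 + \<alpha>)) - \<alpha> * L * x\<^sup>2 * (rst - rs) \<le> -1"
    by (simp add: algebra_simps)
  have L_term: "0 \<le> \<alpha> * L * x\<^sup>2 * (rst - rs)" using \<alpha> L0 \<Delta> by simp
  consider "x \<le> \<eta> / (4 * N)" | "\<eta> / (4 * N) \<le> x" by linarith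
  then show ?thesis
  proof cases
    case 1
    have "u \<le> \<eta> / 4" using u(3) 1 N by (simp add: field_simps)
    have "rst / (1 + \<alpha>) \<le> 1" using rst \<alpha> by (simp add: pos_divide_le_eq)
    then have "\<rho> \<le> 1" "\<eta> \<le> 1" using \<eta> rs by linarith+
    have "3 / 4 \<le> 1 - \<alpha> * u" using au \<open>u \<le> \<eta> / 4\<close> \<open>\<eta> \<le> 1\<close> by linarith
    have "rs / (1 - \<alpha> * u) \<le> \<rho> / (1 - \<alpha> * u)"
      using rs \<open>3 / 4 \<le> 1 - \<alpha> * u\<close> by (simp add: divide_right_mono)
    also have "\<dots> = \<rho> + \<rho> * (\<alpha> * u) / (1 - \<alpha> * u)"
      using \<open>3 / 4 \<le> 1 - \<alpha> * u\<close> by (simp add: field_simps)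
    also have "\<rho> * (\<alpha> * u) / (1 - \<alpha> * u) \<le> (\<eta> / 4) / (3 / 4)"
    proof (rule frac_le)
      have "\<rho> * (\<alpha> * u) \<le> 1 * (\<alpha> * u)"
        using \<open>\<rho> \<le> 1\<close> \<alpha> u by (intro mult_right_mono) auto
      then show "\<rho> * (\<alpha> * u) \<le> \<eta> / 4" using au \<open>u \<le> \<eta> / 4\<close> by linarith
    qed (use \<eta> \<open>3 / 4 \<le> 1 - \<alpha> * u\<close> in auto)
    finally have "rs / (1 - \<alpha> * u) - rst / (1 + \<alpha>) \<le> - (2 / 3) * \<eta>"
      using \<eta>(2) by simp
    then have "\<alpha> * K * (rs / (1 - \<alpha> * u) - rst / (1 + \<alpha>)) \<le> \<alpha> * K * (- (2 / 3) * \<eta>)"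
      using K0 \<alpha> by (intro mult_left_mono) auto
    also have "\<alpha> * K * (- (2 / 3) * \<eta>) = - 4 / 3" using K \<alpha> \<eta> by (simp add: field_simps)
    finally show ?thesis using L_term reformulated by linarith
  next
    case 2
    have "rs / (1 - \<alpha> * u) \<le> 1 / (1 - \<alpha>)"
      using rs rst \<Delta> \<alpha> au u by (intro frac_le) auto
    moreover have "0 \<le> rst / (1 + \<alpha>)" using rs \<Delta> \<alpha> by simp
    ultimately have "\<alpha> * K * (rs / (1 - \<alpha> * u) - rst / (1 + \<alpha>)) \<le> \<alpha> * K * (1 / (1 - \<alpha>))"
      using K0 \<alpha> by (intro mult_left_mono) auto
    also have "\<dots> = K * \<alpha> / (1 - \<alpha>)" by simp
    finally have K_term: "\<alpha> * K * (rs / (1 - \<alpha> * u) - rst / (1 + \<alpha>)) \<le> K * \<alpha> / (1 - \<alpha>)" .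
    moreover have "K * \<alpha> / (1 - \<alpha>) + 1 \<le> L * (\<alpha> * \<Delta> * (\<eta> / (4 * N))\<^sup>2)"
      using L \<alpha> \<Delta> \<eta> N by (simp add: pos_divide_le_eq)
    moreover have "L * (\<alpha> * \<Delta> * (\<eta> / (4 * N))\<^sup>2) \<le> \<alpha> * L * x\<^sup>2 * (rst - rs)"
    proof -
      have "(\<eta> / (4 * N))\<^sup>2 \<le> x\<^sup>2" using 2 \<eta> N by (intro power_mono) auto
      then have "\<Delta> * (\<eta> / (4 * N))\<^sup>2 \<le> (rst - rs) * x\<^sup>2" using \<Delta> by (intro mult_mono) auto
      then have "(\<alpha> * L) * (\<Delta> * (\<eta> / (4 * N))\<^sup>2) \<le> (\<alpha> * L) * ((rst - rs) * x\<^sup>2)"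
        using \<alpha> L0 by (intro mult_left_mono) auto
      then show ?thesis by (simp only: ac_simps)
    qed
    ultimately show ?thesis using K_term reformulated by linarith
  qed
qed

lemma optimal_leader_gain_bound:
  fixes \<alpha> x Q rst K L :: real
  assumes "0 < \<alpha>" "0 < x" "0 \<le> Q" "0 \<le> K" "0 \<le> rst"
  shows "x * rst * (lyapunov K L (x + \<alpha> * Q / x) - lyapunov K L x) \<le> - \<alpha> * rst * Q * L"
proof -
  have y: "0 < x + \<alpha> * Q / x" using assms by (simp add: add_pos_nonneg)
  have "x * rst * (lyapunov K L (x + \<alpha> * Q / x) - lyapunov K L x) =
      - \<alpha> * rst * Q * (K / (x * (x + \<alpha> * Q / x)) + L)"
    using assms y by (simp add: lyapunov_diff)
  also have "\<dots> \<le> - \<alpha> * rst * Q * L"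
  proof -
    have "0 \<le> \<alpha> * rst * Q * (K / (x * (x + \<alpha> * Q / x)))" using assms y by simp
    then show ?thesis by (simp add: algebra_simps)
  qed
  finally show ?thesis .
qed

lemma optimal_leader_loss_bound:
  fixes \<alpha> x pa ra K L N :: real
  assumes \<alpha>: "0 < \<alpha>" "\<alpha> < 1" and x: "1 / N \<le> x" and N: "0 < N" and pa: "0 \<le> pa" "pa \<le> x"
    and "0 \<le> ra" "0 \<le> K"
  shows "pa * ra * (lyapunov K L (x - \<alpha> * pa) - lyapunov K L x)
      \<le> \<alpha> * ra * pa\<^sup>2 * (K * N\<^sup>2 / (1 - \<alpha>) + L)"
proof -
  have x0: "0 < x" by (rule less_le_trans[OF _ x]) (simp add: N)
  have shrunk: "(1 - \<alpha>) * x \<le> x - \<alpha> * pa" using \<alpha> pa by (simp add: algebra_simps)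
  have "0 < (1 - \<alpha>) * x" using \<alpha> x0 by simp
  then have pos: "0 < x - \<alpha> * pa" using shrunk by linarith
  have "1 / (x * (x - \<alpha> * pa)) \<le> 1 / (x * ((1 - \<alpha>) * x))"
    using shrunk x0 \<open>0 < (1 - \<alpha>) * x\<close> pos \<alpha> by (intro divide_left_mono mult_left_mono mult_pos_pos) auto
  also have "\<dots> = (1 / x)\<^sup>2 / (1 - \<alpha>)" by (simp add: power2_eq_square)
  also have "\<dots> \<le> N\<^sup>2 / (1 - \<alpha>)"
  proof -
    have "1 / x \<le> N" using x x0 N by (simp add: field_simps)
    then show ?thesis using \<alpha> x0 by (intro divide_right_mono power_mono) auto
  qed
  finally have "K / (x * (x - \<alpha> * pa)) \<le> K * N\<^sup>2 / (1 - \<alpha>)"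
    using assms by (metis mult_left_mono times_divide_eq_right mult.right_neutral)
  then show ?thesis
    using assms x0 pos by (simp add: lyapunov_diff power2_eq_square mult_left_mono mult.assoc mult.left_commute)
qed

lemma optimal_leader_drift_bound:
  fixes \<alpha> S Q rst \<rho> \<Delta> K L N :: real
  assumes \<alpha>: "0 < \<alpha>" "\<alpha> < 1" and S: "S \<le> \<rho> * Q" and Q: "1 / (4 * N\<^sup>2) \<le> Q" and N: "0 < N"
    and \<rho>: "\<rho> = rst - \<Delta>" "\<rho> \<le> 1" and "0 < \<Delta>" "0 \<le> K"
    and L: "(K * N\<^sup>2 / (1 - \<alpha>) + 4 * N\<^sup>2 / \<alpha>) / \<Delta> \<le> L"
  shows "- \<alpha> * rst * Q * L + \<alpha> * S * (K * N\<^sup>2 / (1 - \<alpha>) + L) \<le> -1"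
proof -
  have Q0: "0 \<le> Q" by (rule order_trans[OF _ Q]) simp
  have "0 \<le> (K * N\<^sup>2 / (1 - \<alpha>) + 4 * N\<^sup>2 / \<alpha>) / \<Delta>" using assms by simp
  moreover have "0 \<le> K * N\<^sup>2 / (1 - \<alpha>)" using assms by simp
  ultimately have C0: "0 \<le> K * N\<^sup>2 / (1 - \<alpha>) + L" using L by linarith
  have "\<alpha> * S * (K * N\<^sup>2 / (1 - \<alpha>) + L) \<le> \<alpha> * (\<rho> * Q) * (K * N\<^sup>2 / (1 - \<alpha>) + L)"
    using S C0 \<alpha> by (intro mult_right_mono mult_left_mono) auto
  also have "\<dots> \<le> \<alpha> * Q * (K * N\<^sup>2 / (1 - \<alpha>)) + \<alpha> * \<rho> * Q * L"
  proof -
    have "\<rho> * (\<alpha> * Q * (K * N\<^sup>2 / (1 - \<alpha>))) \<le> 1 * (\<alpha> * Q * (K * N\<^sup>2 / (1 - \<alpha>)))"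
      using \<rho> Q0 assms by (intro mult_right_mono) auto
    then show ?thesis by (simp add: algebra_simps)
  qed
  finally have "- \<alpha> * rst * Q * L + \<alpha> * S * (K * N\<^sup>2 / (1 - \<alpha>) + L) \<le>
      \<alpha> * Q * (K * N\<^sup>2 / (1 - \<alpha>) - L * \<Delta>)"
    unfolding \<rho>(1) by (simp add: algebra_simps)
  also have "\<dots> \<le> \<alpha> * Q * (- 4 * N\<^sup>2 / \<alpha>)"
    using L \<open>0 < \<Delta>\<close> \<alpha> Q0 by (intro mult_left_mono) (simp_all add: field_simps)
  also have "\<dots> \<le> -1" using Q N \<alpha> by (simp add: field_simps)
  finally show ?thesis .
qed

section \<open>Drift of the SAMBA chain\<close>

locale samba_gap_setting =
  fixes \<alpha> :: real and r :: "'a::finite \<Rightarrow> real" and astar :: 'a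
  assumes arms: "2 \<le> CARD('a)"
    and r_range: "\<And>a. 0 \<le> r a \<and> r a \<le> 1"
    and opt: "\<And>a. a \<noteq> astar \<Longrightarrow> r a < r astar"
    and alpha_pos: "0 < \<alpha>" and alpha_less_1: "\<alpha> < 1"
    and alpha_gap: "\<alpha> * (r astar - gap r astar) < gap r astar"
begin

abbreviation \<Delta> :: real where "\<Delta> \<equiv> gap r astar"

definition \<rho> :: real where "\<rho> = r astar - \<Delta>"

definition \<eta> :: real where "\<eta> = r astar / (1 + \<alpha>) - \<rho>"

(* K makes the K-term gain at least 4/3 while the optimal arm's weight is at most eta/4 times the
   leader's; the first entry of L lets the L-term win when that weight is at least eta/(4N), the
   second when the optimal arm leads. *)
definition K :: real where "K = 2 / (\<alpha> * \<eta>)"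

definition L :: real where
  "L = (let N = real CARD('a) in
         max ((K * \<alpha> / (1 - \<alpha>) + 1) / (\<alpha> * \<Delta> * (\<eta> / (4 * N))\<^sup>2))
             ((K * N\<^sup>2 / (1 - \<alpha>) + 4 * N\<^sup>2 / \<alpha>) / \<Delta>))"

abbreviation V :: "('a \<Rightarrow> real) \<Rightarrow> real" where "V q \<equiv> lyapunov K L (q astar)"

lemma rho_eq_Max: "\<rho> = Max (r ` (-{astar}))"
  by (simp add: \<rho>_def gap_def Compl_eq_Diff_UNIV)

lemma suboptimal_le_rho: "a \<noteq> astar \<Longrightarrow> r a \<le> \<rho>"
  unfolding rho_eq_Max by (intro Max_ge) auto

lemma rho_attained: "\<exists>b. b \<noteq> astar \<and> r b = \<rho>"
proof -
  have "card (-{astar}) = CARD('a) - 1" by (simp add: Compl_eq_Diff_UNIV card_Diff_subset)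
  then have "-{astar} \<noteq> {}" using arms by auto
  then have "\<rho> \<in> r ` (-{astar})" unfolding rho_eq_Max by (intro Max_in) auto
  then show ?thesis by auto
qed

lemma gap_pos: "0 < \<Delta>"
proof -
  obtain b where "b \<noteq> astar" "r b = \<rho>" using rho_attained by blast
  then show ?thesis using opt[of b] by (simp add: \<rho>_def)
qed

lemma eta_pos: "0 < \<eta>"
proof -
  have "\<rho> * (1 + \<alpha>) < r astar" using alpha_gap by (simp add: \<rho>_def algebra_simps)
  then show ?thesis using alpha_pos by (simp add: \<eta>_def field_simps)
qed

lemma K_pos: "0 < K"
  using alpha_pos eta_pos by (simp add: K_def)

lemma L_ge:
  "(K * \<alpha> / (1 - \<alpha>) + 1) / (\<alpha> * \<Delta> * (\<eta> / (4 * real CARD('a)))\<^sup>2) \<le> L"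
  "(K * (real CARD('a))\<^sup>2 / (1 - \<alpha>) + 4 * (real CARD('a))\<^sup>2 / \<alpha>) / \<Delta> \<le> L"
  by (simp_all add: L_def Let_def)

lemma L_nonneg: "0 \<le> L"
  by (rule order_trans[OF _ L_ge(2)]) (use K_pos alpha_pos alpha_less_1 gap_pos in simp)

lemma lyapunov_nonneg:
  assumes "p \<in> prob_vectors" "0 < p astar"
  shows "0 \<le> V p"
proof -
  have "p astar \<le> sum p UNIV"
    using assms(1) by (intro member_le_sum) (auto simp: prob_vectors_def)
  then have "p astar \<le> 1" using assms(1) by (simp add: prob_vectors_def)
  then show ?thesis using assms K_pos L_nonneg by (simp add: lyapunov_def)
qed

lemma lyapunov_le_of_ge:
  assumes "(1 - \<alpha>) / 2 \<le> x"
  shows "lyapunov K L x \<le> 2 * K / (1 - \<alpha>) + L"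
proof -
  have "0 < (1 - \<alpha>) / 2" using alpha_less_1 by simp
  then have "lyapunov K L x \<le> K / ((1 - \<alpha>) / 2) + L"
    unfolding lyapunov_def using assms K_pos L_nonneg
    by (intro add_mono divide_left_mono) (auto simp: mult_left_le)
  also have "\<dots> = 2 * K / (1 - \<alpha>) + L" by simp
  finally show ?thesis .
qed

lemma drift_suboptimal_leader:
  assumes pv: "p \<in> prob_vectors" and x0: "0 < p astar"
    and s: "s \<in> argmax_arms p" "s \<noteq> astar"
  shows "(\<Sum>a\<in>UNIV. p a * r a * (V (samba_update \<alpha> p s a True) - V p)) \<le> -1"
proof -
  define x y where "x = p astar" and "y = p s"
  define u where "u = x / y"
  have xy: "x \<le> y" using s by (simp add: argmax_arms_def x_def y_def)
  have yN: "1 / real CARD('a) \<le> y" using argmax_arms_ge_inverse_card[OF pv s(1)] by (simp add: y_def)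
  have x: "0 < x" using x0 by (simp add: x_def)
  then have y: "0 < y" using xy by linarith
  have u: "0 < u" "u \<le> 1" "u \<le> real CARD('a) * x"
    using x y xy yN by (auto simp: u_def field_simps)
  have "\<alpha> * u \<le> \<alpha>" using u alpha_pos by (simp add: mult_left_le)
  then have shrink: "0 < 1 - \<alpha> * u" using alpha_less_1 by linarith
  have new_x: "samba_update \<alpha> p s a True astar =
      (if a = astar then (1 + \<alpha>) * x else if a = s then (1 - \<alpha> * u) * x else x)" for a
    using s(2) y by (auto simp: samba_update_reward_other u_def x_def y_def power2_eq_square field_simps)
  have "(\<Sum>a\<in>UNIV. p a * r a * (V (samba_update \<alpha> p s a True) - V p)) =
      (\<Sum>a\<in>UNIV. (if a = astar then x * r astar * (lyapunov K L ((1 + \<alpha>) * x) - lyapunov K L x) else 0)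
               + (if a = s then y * r s * (lyapunov K L ((1 - \<alpha> * u) * x) - lyapunov K L x) else 0))"
    using s(2) by (intro sum.cong refl) (auto simp: new_x x_def y_def)
  also have "\<dots> = x * r astar * (lyapunov K L ((1 + \<alpha>) * x) - lyapunov K L x)
                 + y * r s * (lyapunov K L ((1 - \<alpha> * u) * x) - lyapunov K L x)"
    by (simp add: sum.distrib)
  also have "\<dots> = \<alpha> * r s * (K / (1 - \<alpha> * u) + L * x\<^sup>2) - \<alpha> * r astar * (K / (1 + \<alpha>) + L * x\<^sup>2)"
  proof -
    define Dg Dl where "Dg = lyapunov K L ((1 + \<alpha>) * x) - lyapunov K L x"
      and "Dl = lyapunov K L ((1 - \<alpha> * u) * x) - lyapunov K L x"
    have "x * r astar * Dg = r astar * (x * Dg)" by (simp add: mult_ac)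
    also have "x * Dg = (1 - (1 + \<alpha>)) * (K / (1 + \<alpha>) + L * x\<^sup>2)"
      unfolding Dg_def using x alpha_pos by (intro lyapunov_scaled_diff) auto
    finally have gain: "x * r astar * Dg = - \<alpha> * r astar * (K / (1 + \<alpha>) + L * x\<^sup>2)"
      by simp
    have "y * r s * Dl = r s / u * (x * Dl)" using x y by (simp add: u_def)
    also have "x * Dl = (1 - (1 - \<alpha> * u)) * (K / (1 - \<alpha> * u) + L * x\<^sup>2)"
      unfolding Dl_def using x shrink by (intro lyapunov_scaled_diff) auto
    finally have loss: "y * r s * Dl = \<alpha> * r s * (K / (1 - \<alpha> * u) + L * x\<^sup>2)"
      using u(1) by simp
    show ?thesis using gain loss by (simp add: Dg_def Dl_def)
  qed
  also have "\<dots> \<le> -1"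
  proof (rule suboptimal_leader_drift_bound[OF alpha_pos alpha_less_1 u _ _ _ _ gap_pos _ eta_pos _ K_def L_ge(1)])
    show "0 \<le> r s" "r astar \<le> 1" using r_range by auto
    show "r s \<le> \<rho>" using suboptimal_le_rho s(2) by simp
    then show "\<Delta> \<le> r astar - r s" by (simp add: \<rho>_def)
    show "r astar / (1 + \<alpha>) = \<rho> + \<eta>" by (simp add: \<eta>_def)
  qed simp
  finally show ?thesis .
qed

lemma drift_optimal_leader:
  assumes pv: "p \<in> prob_vectors" and lead: "astar \<in> argmax_arms p" and half: "p astar \<le> 1/2"
  shows "(\<Sum>a\<in>UNIV. p a * r a * (V (samba_update \<alpha> p astar a True) - V p)) \<le> -1"
proof -
  define x Q where "x = p astar" and "Q = (\<Sum>c\<in>-{astar}. (p c)\<^sup>2)"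
  define C where "C = K * (real CARD('a))\<^sup>2 / (1 - \<alpha>) + L"
  have xN: "1 / real CARD('a) \<le> x" using argmax_arms_ge_inverse_card[OF pv lead] by (simp add: x_def)
  then have x: "0 < x" by (rule less_le_trans[rotated]) simp
  have Q: "0 \<le> Q" by (simp add: Q_def sum_nonneg)
  have new_x: "samba_update \<alpha> p astar a True astar = (if a = astar then x + \<alpha> * Q / x else x - \<alpha> * p a)" for a
    by (simp add: samba_update_reward_leader[OF pv] x_def Q_def)
  have "(\<Sum>a\<in>UNIV. p a * r a * (V (samba_update \<alpha> p astar a True) - V p)) =
      p astar * r astar * (V (samba_update \<alpha> p astar astar True) - V p)
      + (\<Sum>a\<in>-{astar}. p a * r a * (V (samba_update \<alpha> p astar a True) - V p))"
    by (simp add: Compl_eq_Diff_UNIV sum.remove)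
  also have "\<dots> = x * r astar * (lyapunov K L (x + \<alpha> * Q / x) - lyapunov K L x)
      + (\<Sum>a\<in>-{astar}. p a * r a * (lyapunov K L (x - \<alpha> * p a) - lyapunov K L x))"
    by (simp add: new_x x_def)
  also have "\<dots> \<le> - \<alpha> * r astar * Q * L + (\<Sum>a\<in>-{astar}. \<alpha> * r a * (p a)\<^sup>2 * C)"
  proof (intro add_mono sum_mono)
    show "x * r astar * (lyapunov K L (x + \<alpha> * Q / x) - lyapunov K L x) \<le> - \<alpha> * r astar * Q * L"
      using alpha_pos x Q K_pos r_range by (intro optimal_leader_gain_bound) auto
    fix a
    have "p a \<le> x" using lead by (simp add: argmax_arms_def x_def)
    then show "p a * r a * (lyapunov K L (x - \<alpha> * p a) - lyapunov K L x) \<le> \<alpha> * r a * (p a)\<^sup>2 * C"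
      unfolding C_def using alpha_pos alpha_less_1 xN K_pos r_range pv
      by (intro optimal_leader_loss_bound) (auto simp: prob_vectors_def)
  qed
  also have "(\<Sum>a\<in>-{astar}. \<alpha> * r a * (p a)\<^sup>2 * C) = \<alpha> * (\<Sum>a\<in>-{astar}. r a * (p a)\<^sup>2) * C"
    by (simp add: sum_distrib_left sum_distrib_right mult_ac)
  also have "- \<alpha> * r astar * Q * L + \<dots> \<le> -1"
    unfolding C_def
  proof (rule optimal_leader_drift_bound[OF alpha_pos alpha_less_1 _ _ _ _ _ gap_pos _ L_ge(2)])
    show "(\<Sum>a\<in>-{astar}. r a * (p a)\<^sup>2) \<le> \<rho> * Q"
      unfolding Q_def sum_distrib_left
      using suboptimal_le_rho by (intro sum_mono mult_right_mono) auto
    show "1 / (4 * (real CARD('a))\<^sup>2) \<le> Q"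
      unfolding Q_def using sum_squares_compl_ge[OF pv half arms] .
    show "\<rho> = r astar - \<Delta>" by (simp add: \<rho>_def)
    show "\<rho> \<le> 1" using rho_attained r_range by metis
  qed (use K_pos in auto)
  finally show ?thesis .
qed

lemma expectation_lyapunov_samba_step:
  assumes "p \<in> prob_vectors" "0 < p astar" "p astar \<le> 1/2"
  shows "measure_pmf.expectation (samba_step \<alpha> r p) V \<le> V p - 1"
  using expectation_samba_step_le[OF assms(1) r_range, where f = V and c = "-1"]
    drift_optimal_leader[OF assms(1) _ assms(3)] drift_suboptimal_leader[OF assms(1,2)]
  by fastforce

theorem expected_tau2_le_lyapunov:
  assumes "p \<in> prob_vectors" "0 < p astar" "p astar \<le> 1/2"
  shows "expected_tau2 \<alpha> r astar p \<le> ennreal (V p)"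
proof (rule expected_tau2_le)
  let ?S = "{q. q \<in> prob_vectors \<and> 0 < q astar}"
  fix n
  show "(\<Sum>k<n. tau2_gt_prob \<alpha> r astar p k) \<le> V p"
  proof (rule sum_tau2_gt_prob_le_lyapunov[where S = ?S])
    fix q q' assume q: "q \<in> ?S" and "q' \<in> set_pmf (samba_step \<alpha> r q)"
    then obtain s a R where "s \<in> argmax_arms q" "q' = samba_update \<alpha> q s a R"
      by (auto elim: set_pmf_samba_step)
    then show "q' \<in> ?S"
      using q samba_update_in_prob_vectors samba_update_nonneg_and_pos[of q \<alpha> s a R astar]
        alpha_pos alpha_less_1
      by auto
  qed (use assms lyapunov_nonneg expectation_lyapunov_samba_step in auto)
qed

end

theorem corollary7:
  fixes r :: "'a::finite \<Rightarrow> real" and astar :: 'a and \<alpha> :: real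
  assumes arms: "CARD('a) \<ge> 2"
    and r_range: "\<And>a. 0 \<le> r a \<and> r a \<le> 1"
    and opt: "\<And>a. a \<noteq> astar \<Longrightarrow> r a < r astar"
    and alpha: "0 < \<alpha>" "\<alpha> < 1"
    and alpha_gap: "\<alpha> * (r astar - gap r astar) < gap r astar"
  shows "(SUP p\<in>{p\<in>prob_vectors. (1 - \<alpha>) / 2 \<le> p astar \<and> p astar < 1/2}.
            expected_tau2 \<alpha> r astar p) < \<top>"
proof -
  interpret samba_gap_setting \<alpha> r astar
    using assms by unfold_locales auto
  have "expected_tau2 \<alpha> r astar p \<le> ennreal (2 * K / (1 - \<alpha>) + L)"
    if p: "p \<in> prob_vectors" "(1 - \<alpha>) / 2 \<le> p astar" "p astar < 1/2" for p
  proof -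
    have "0 < p astar" using p(2) alpha by (simp add: order_less_le_trans[rotated])
    then have "expected_tau2 \<alpha> r astar p \<le> ennreal (V p)"
      using expected_tau2_le_lyapunov p by simp
    also have "\<dots> \<le> ennreal (2 * K / (1 - \<alpha>) + L)"
      using lyapunov_le_of_ge[OF p(2)] by (rule ennreal_leI)
    finally show ?thesis .
  qed
  then have "(SUP p\<in>{p\<in>prob_vectors. (1 - \<alpha>) / 2 \<le> p astar \<and> p astar < 1/2}.
      expected_tau2 \<alpha> r astar p) \<le> ennreal (2 * K / (1 - \<alpha>) + L)"
    by (intro SUP_least) auto
  also have "\<dots> < \<top>" by simp
  finally show ?thesis .
qed

end
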